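(* Let $\Delta\in(0,1]$. There exist an MDP and a parameter space $\Theta=\{\theta_1,\theta_2\}$ with $D_{\mathrm{KL}}(p_{\theta_1}\|p_{\theta_2})<\infty$, $D_{\mathrm{KL}}(p_{\theta_2}\|p_{\theta_1})<\infty$ and $J(\theta_1)-J(\theta_2)=\Delta$ such that, for sufficiently large $n$, every algorithm for the online policy optimization problem suffers expected regret $\mathbb{E}R(n)\ge \frac{1}{32\Delta}$.
   Context: An MDP with state space $\mathcal S$, action space $\mathcal A$, transition kernel $P$, initial-state distribution $\mu$, reward function and horizon $H$ generates trajectories $\tau=(s_0,a_0,\dots,s_{H-1},a_{H-1})$ with return $\mathcal R(\tau)$. A parametric policy $\pi_\theta(\cdot|s)$, $\theta\in\Theta$, induces the trajectory distribution $p_\theta(\tau)=\mu(s_0)\prod_{h=0}^{H-1}\pi_\theta(a_h|s_h)P(s_{h+1}|s_h,a_h)$, and its expected return is $J(\theta)=\mathbb E_{\tau\sim p_\theta}[\mathcal R(\tau)]$. Online policy optimization (with mediator feedback): at each round $t=1,\dots,n$ the algorithm selects $\theta_t\in\Theta$ as a (possibly randomized) function of the history $\{(\theta_i,\tau_i,\mathcal R(\tau_i))\}_{i<t}$, executes $\pi_{\theta_t}$, and observes a trajectory $\tau_t\sim p_{\theta_t}$ and its return $\mathcal R(\tau_t)$. With $J^*=\sup_{\theta\in\Theta}J(\theta)$ and $\Delta(\theta)=J^*-J(\theta)$, the regret is $R(n)=\sum_{t=1}^n\Delta(\theta_t)$. $D_{\mathrm{KL}}$ denotes the Kullback–Leibler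 divergence. *)

theory Defs
  imports "HOL-Probability.Probability"
begin

text \<open>A trajectory is the list [(s_0,a_0),...,(s_{H-1},a_{H-1})].\<close>

fun traj_from :: "('s \<Rightarrow> 'a \<Rightarrow> 's pmf) \<Rightarrow> ('s \<Rightarrow> 'a pmf) \<Rightarrow> nat \<Rightarrow> 's \<Rightarrow> ('s \<times> 'a) list pmf" where
  "traj_from P pol 0 s = return_pmf []"
| "traj_from P pol (Suc h) s =
     pol s \<bind> (\<lambda>a. P s a \<bind> (\<lambda>s'. map_pmf (\<lambda>rest. (s, a) # rest) (traj_from P pol h s')))"

definition traj_dist :: "'s pmf \<Rightarrow> ('s \<Rightarrow> 'a \<Rightarrow> 's pmf) \<Rightarrow> ('s \<Rightarrow> 'a pmf) \<Rightarrow> nat \<Rightarrow> ('s \<times> 'a) list pmf" where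
  "traj_dist mu P pol H = mu \<bind> traj_from P pol H"

definition ret :: "('s \<Rightarrow> 'a \<Rightarrow> real) \<Rightarrow> ('s \<times> 'a) list \<Rightarrow> real" where
  "ret r tau = sum_list (map (\<lambda>(s, a). r s a) tau)"

definition Jret :: "'s pmf \<Rightarrow> ('s \<Rightarrow> 'a \<Rightarrow> 's pmf) \<Rightarrow> ('p \<Rightarrow> 's \<Rightarrow> 'a pmf) \<Rightarrow> ('s \<Rightarrow> 'a \<Rightarrow> real)
     \<Rightarrow> nat \<Rightarrow> 'p \<Rightarrow> real" where
  "Jret mu P pol r H theta = measure_pmf.expectation (traj_dist mu P (pol theta) H) (ret r)"

definition Jstar :: "'s pmf \<Rightarrow> ('s \<Rightarrow> 'a \<Rightarrow> 's pmf) \<Rightarrow> ('p \<Rightarrow> 's \<Rightarrow> 'a pmf) \<Rightarrow> ('s \<Rightarrow> 'a \<Rightarrow> real)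
     \<Rightarrow> nat \<Rightarrow> 'p set \<Rightarrow> real" where
  "Jstar mu P pol r H Theta = (SUP theta\<in>Theta. Jret mu P pol r H theta)"

definition gap :: "'s pmf \<Rightarrow> ('s \<Rightarrow> 'a \<Rightarrow> 's pmf) \<Rightarrow> ('p \<Rightarrow> 's \<Rightarrow> 'a pmf) \<Rightarrow> ('s \<Rightarrow> 'a \<Rightarrow> real)
     \<Rightarrow> nat \<Rightarrow> 'p set \<Rightarrow> 'p \<Rightarrow> real" where
  "gap mu P pol r H Theta theta = Jstar mu P pol r H Theta - Jret mu P pol r H theta"

text \<open>An (online, randomized) algorithm maps the history
  [(theta_1,tau_1,R(tau_1)),...,(theta_{t-1},tau_{t-1},R(tau_{t-1}))] to a distribution over
  the next parameter theta_t.\<close>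
type_synonym ('p, 's, 'a) history = "('p \<times> ('s \<times> 'a) list \<times> real) list"

fun run :: "'s pmf \<Rightarrow> ('s \<Rightarrow> 'a \<Rightarrow> 's pmf) \<Rightarrow> ('p \<Rightarrow> 's \<Rightarrow> 'a pmf) \<Rightarrow> ('s \<Rightarrow> 'a \<Rightarrow> real) \<Rightarrow> nat
     \<Rightarrow> (('p, 's, 'a) history \<Rightarrow> 'p pmf) \<Rightarrow> nat \<Rightarrow> ('p, 's, 'a) history pmf" where
  "run mu P pol r H alg 0 = return_pmf []"
| "run mu P pol r H alg (Suc t) =
     run mu P pol r H alg t \<bind> (\<lambda>hist. alg hist \<bind> (\<lambda>theta.
       map_pmf (\<lambda>tau. hist @ [(theta, tau, ret r tau)]) (traj_dist mu P (pol theta) H)))"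

definition exp_regret :: "'s pmf \<Rightarrow> ('s \<Rightarrow> 'a \<Rightarrow> 's pmf) \<Rightarrow> ('p \<Rightarrow> 's \<Rightarrow> 'a pmf) \<Rightarrow> ('s \<Rightarrow> 'a \<Rightarrow> real)
     \<Rightarrow> nat \<Rightarrow> 'p set \<Rightarrow> (('p, 's, 'a) history \<Rightarrow> 'p pmf) \<Rightarrow> nat \<Rightarrow> real" where
  "exp_regret mu P pol r H Theta alg n =
     measure_pmf.expectation (run mu P pol r H alg n)
       (\<lambda>hist. sum_list (map (\<lambda>x. gap mu P pol r H Theta (fst x)) hist))"

text \<open>Kullback-Leibler divergence of discrete distributions (natural log):
  sum_x p(x) ln(p(x)/q(x)); it is +infinity unless p is absolutely continuous w.r.t. q
  and the series converges (for real series, unconditional = absolute convergence;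
  the negative part is always summable, so divergence means +infinity).\<close>
definition KL_pmf :: "'x pmf \<Rightarrow> 'x pmf \<Rightarrow> ereal" where
  "KL_pmf p q =
     (if (\<forall>x. pmf q x = 0 \<longrightarrow> pmf p x = 0) \<and>
         (\<lambda>x. pmf p x * ln (pmf p x / pmf q x)) summable_on UNIV
      then ereal (\<Sum>\<^sub>\<infinity>x. pmf p x * ln (pmf p x / pmf q x))
      else \<infinity>)"

text \<open>Relabelling of the two parameters (the algorithm does not know which label is better).\<close>
definition relabel :: "'p \<Rightarrow> 'p \<Rightarrow> ('p \<Rightarrow> 'b) \<Rightarrow> 'p \<Rightarrow> 'b" where
  "relabel t1 t2 f = (\<lambda>t. if t = t1 then f t2 else if t = t2 then f t1 else f t)"

end

theory Submission
  imports Defs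
begin

(* In a one-step MDP the two parameters play action 1 with probabilities 2e and e, and action 1
   pays M = \<Delta>/e, so their gap is \<Delta>. Under every parameter the trajectory with action 0 has
   probability at least 1 - 2e, so with probability at least (1 - 2e)^k the first k rounds all show
   this same trajectory; on that event the algorithm behaves identically whichever of the two
   labellings of the parameters is in force. Each parameter it picks costs \<Delta> under one of the
   labellings, so the two expected regrets sum to at least (1 - 2e)^k \<Delta> k, which for
   k = \<lceil>1/\<Delta>\<^sup>2\<rceil> and e = 1/(4(k+1)) is at least 1/(2\<Delta>). *)

fun run_fixed_traj :: "('s \<Rightarrow> 'a \<Rightarrow> real) \<Rightarrow> (('p, 's, 'a) history \<Rightarrow> 'p pmf) \<Rightarrow> ('s \<times> 'a) list
     \<Rightarrow> nat \<Rightarrow> ('p, 's, 'a) history pmf" where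
  "run_fixed_traj r alg \<tau> 0 = return_pmf []"
| "run_fixed_traj r alg \<tau> (Suc t) =
     run_fixed_traj r alg \<tau> t \<bind> (\<lambda>hist. map_pmf (\<lambda>\<theta>. hist @ [(\<theta>, \<tau>, ret r \<tau>)]) (alg hist))"

lemma length_set_pmf_run: "hist \<in> set_pmf (run mu P pol r H alg t) \<Longrightarrow> length hist = t"
  by (induction t arbitrary: hist) auto

lemma length_set_pmf_run_fixed_traj: "hist \<in> set_pmf (run_fixed_traj r alg \<tau> t) \<Longrightarrow> length hist = t"
  by (induction t arbitrary: hist) auto

lemma nn_integral_measure_pmf_ge_pmf:
  "ennreal (pmf M x) * f x \<le> (\<integral>\<^sup>+y. f y \<partial>measure_pmf M)"
proof -
  have "ennreal (pmf M x) * f x = (\<integral>\<^sup>+y. f x * indicator {x} y \<partial>measure_pmf M)"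
    by (simp add: nn_integral_cmult emeasure_pmf_single mult.commute)
  also have "\<dots> \<le> (\<integral>\<^sup>+y. f y \<partial>measure_pmf M)"
    by (intro nn_integral_mono) (auto simp: indicator_def)
  finally show ?thesis .
qed

lemma nn_integral_run_mono:
  assumes F_mono: "\<And>hist x. F hist \<le> F (hist @ [x])" and "k \<le> n"
  shows "(\<integral>\<^sup>+hist. F hist \<partial>measure_pmf (run mu P pol r H alg k))
           \<le> (\<integral>\<^sup>+hist. F hist \<partial>measure_pmf (run mu P pol r H alg n))"
  using \<open>k \<le> n\<close>
proof (induction n rule: dec_induct)
  case base
  show ?case by simp
next
  case (step n)
  have "(\<integral>\<^sup>+hist. F hist \<partial>measure_pmf (run mu P pol r H alg n)) =
    (\<integral>\<^sup>+hist. \<integral>\<^sup>+\<theta>. \<integral>\<^sup>+\<tau>. F hist \<partial>measure_pmf (traj_dist mu P (pol \<theta>) H)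
       \<partial>measure_pmf (alg hist) \<partial>measure_pmf (run mu P pol r H alg n))"
    by simp
  also have "\<dots> \<le>
    (\<integral>\<^sup>+hist. \<integral>\<^sup>+\<theta>. \<integral>\<^sup>+\<tau>. F (hist @ [(\<theta>, \<tau>, ret r \<tau>)]) \<partial>measure_pmf (traj_dist mu P (pol \<theta>) H)
       \<partial>measure_pmf (alg hist) \<partial>measure_pmf (run mu P pol r H alg n))"
    by (intro nn_integral_mono F_mono)
  also have "\<dots> = (\<integral>\<^sup>+hist. F hist \<partial>measure_pmf (run mu P pol r H alg (Suc n)))"
    by simp
  finally show ?case using step.IH by order
qed

lemma nn_integral_run_ge_run_fixed_traj:
  assumes "0 \<le> c" and traj_prob: "\<And>\<theta>. c \<le> pmf (traj_dist mu P (pol \<theta>) H) \<tau>"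
  shows "ennreal (c ^ t) * (\<integral>\<^sup>+hist. F hist \<partial>measure_pmf (run_fixed_traj r alg \<tau> t))
           \<le> (\<integral>\<^sup>+hist. F hist \<partial>measure_pmf (run mu P pol r H alg t))"
proof (induction t arbitrary: F)
  case 0
  show ?case by simp
next
  case (Suc t)
  define G where "G hist = (\<integral>\<^sup>+\<theta>. F (hist @ [(\<theta>, \<tau>, ret r \<tau>)]) \<partial>measure_pmf (alg hist))" for hist
  have step: "ennreal c * G hist \<le> (\<integral>\<^sup>+\<theta>. \<integral>\<^sup>+\<tau>'. F (hist @ [(\<theta>, \<tau>', ret r \<tau>')])
                \<partial>measure_pmf (traj_dist mu P (pol \<theta>) H) \<partial>measure_pmf (alg hist))" for hist
  proof -
    have "ennreal c * G hist = (\<integral>\<^sup>+\<theta>. ennreal c * F (hist @ [(\<theta>, \<tau>, ret r \<tau>)]) \<partial>measure_pmf (alg hist))"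
      by (simp add: G_def nn_integral_cmult)
    also have "\<dots> \<le> (\<integral>\<^sup>+\<theta>. ennreal (pmf (traj_dist mu P (pol \<theta>) H) \<tau>) * F (hist @ [(\<theta>, \<tau>, ret r \<tau>)])
                          \<partial>measure_pmf (alg hist))"
      using traj_prob by (intro nn_integral_mono mult_right_mono) auto
    also have "\<dots> \<le> (\<integral>\<^sup>+\<theta>. \<integral>\<^sup>+\<tau>'. F (hist @ [(\<theta>, \<tau>', ret r \<tau>')])
                \<partial>measure_pmf (traj_dist mu P (pol \<theta>) H) \<partial>measure_pmf (alg hist))"
      by (intro nn_integral_mono nn_integral_measure_pmf_ge_pmf)
    finally show ?thesis .
  qed
  have "ennreal (c ^ Suc t) * (\<integral>\<^sup>+hist. F hist \<partial>measure_pmf (run_fixed_traj r alg \<tau> (Suc t)))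
      = ennreal c * (ennreal (c ^ t) * (\<integral>\<^sup>+hist. G hist \<partial>measure_pmf (run_fixed_traj r alg \<tau> t)))"
    using \<open>0 \<le> c\<close> by (simp add: G_def ennreal_mult mult.assoc)
  also have "\<dots> \<le> ennreal c * (\<integral>\<^sup>+hist. G hist \<partial>measure_pmf (run mu P pol r H alg t))"
    by (intro mult_left_mono Suc.IH) simp
  also have "\<dots> \<le> (\<integral>\<^sup>+hist. \<integral>\<^sup>+\<theta>. \<integral>\<^sup>+\<tau>'. F (hist @ [(\<theta>, \<tau>', ret r \<tau>')])
       \<partial>measure_pmf (traj_dist mu P (pol \<theta>) H) \<partial>measure_pmf (alg hist) \<partial>measure_pmf (run mu P pol r H alg t))"
    by (subst nn_integral_cmult[symmetric]) (auto intro: nn_integral_mono step)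
  also have "\<dots> = (\<integral>\<^sup>+hist. F hist \<partial>measure_pmf (run mu P pol r H alg (Suc t)))"
    by simp
  finally show ?case .
qed

lemma ennreal_exp_regret:
  assumes "\<And>\<theta>. 0 \<le> gap mu P pol r H \<Theta> \<theta> \<and> gap mu P pol r H \<Theta> \<theta> \<le> D"
  shows "ennreal (exp_regret mu P pol r H \<Theta> alg n) =
    (\<integral>\<^sup>+hist. ennreal (\<Sum>x\<leftarrow>hist. gap mu P pol r H \<Theta> (fst x)) \<partial>measure_pmf (run mu P pol r H alg n))"
  unfolding exp_regret_def
proof (intro nn_integral_eq_integral[symmetric] measure_pmf.integrable_const_bound[where B = "D * n"]
    AE_pmfI)
  fix hist assume "hist \<in> set_pmf (run mu P pol r H alg n)"
  then have "length hist = n" by (rule length_set_pmf_run)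
  moreover have "0 \<le> (\<Sum>x\<leftarrow>hist. gap mu P pol r H \<Theta> (fst x))"
    using assms by (intro sum_list_nonneg) auto
  moreover have "(\<Sum>x\<leftarrow>hist. gap mu P pol r H \<Theta> (fst x)) \<le> (\<Sum>x\<leftarrow>hist. D)"
    using assms by (intro sum_list_mono) auto
  ultimately show "0 \<le> (\<Sum>x\<leftarrow>hist. gap mu P pol r H \<Theta> (fst x))"
    "norm (\<Sum>x\<leftarrow>hist. gap mu P pol r H \<Theta> (fst x)) \<le> D * n"
    by (auto simp: sum_list_triv mult.commute)
qed auto

lemma exp_regret_nonneg:
  assumes "\<And>\<theta>. 0 \<le> gap mu P pol r H \<Theta> \<theta>"
  shows "0 \<le> exp_regret mu P pol r H \<Theta> alg n"
  unfolding exp_regret_def using assms by (intro integral_nonneg_AE AE_I2 sum_list_nonneg) auto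

lemma nn_integral_run_fixed_traj_regret_sum_ge:
  assumes "\<And>\<theta>. 0 \<le> g\<^sub>1 \<theta>" and "\<And>\<theta>. 0 \<le> g\<^sub>2 \<theta>" and gap_sum: "\<And>\<theta>. \<Delta> \<le> g\<^sub>1 \<theta> + g\<^sub>2 \<theta>"
  shows "ennreal (\<Delta> * t) \<le> (\<integral>\<^sup>+hist. ennreal (\<Sum>x\<leftarrow>hist. g\<^sub>1 (fst x)) + ennreal (\<Sum>x\<leftarrow>hist. g\<^sub>2 (fst x))
                                 \<partial>measure_pmf (run_fixed_traj r alg \<tau> t))"
proof -
  have pointwise: "ennreal (\<Delta> * t) \<le> ennreal (\<Sum>x\<leftarrow>hist. g\<^sub>1 (fst x)) + ennreal (\<Sum>x\<leftarrow>hist. g\<^sub>2 (fst x))"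
    if "hist \<in> set_pmf (run_fixed_traj r alg \<tau> t)" for hist
  proof -
    have "\<Delta> * t = (\<Sum>x\<leftarrow>hist. \<Delta>)"
      using length_set_pmf_run_fixed_traj[OF that] by (simp add: sum_list_triv)
    also have "\<dots> \<le> (\<Sum>x\<leftarrow>hist. g\<^sub>1 (fst x) + g\<^sub>2 (fst x))"
      by (intro sum_list_mono gap_sum)
    moreover have "0 \<le> (\<Sum>x\<leftarrow>hist. g\<^sub>1 (fst x))" "0 \<le> (\<Sum>x\<leftarrow>hist. g\<^sub>2 (fst x))"
      using assms by (auto intro!: sum_list_nonneg)
    ultimately show ?thesis
      by (simp add: sum_list_addf ennreal_plus[symmetric] del: ennreal_plus)
  qed
  have "ennreal (\<Delta> * t) = (\<integral>\<^sup>+hist. ennreal (\<Delta> * t) \<partial>measure_pmf (run_fixed_traj r alg \<tau> t))"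
    by simp
  also have "\<dots> \<le> (\<integral>\<^sup>+hist. ennreal (\<Sum>x\<leftarrow>hist. g\<^sub>1 (fst x)) + ennreal (\<Sum>x\<leftarrow>hist. g\<^sub>2 (fst x))
                      \<partial>measure_pmf (run_fixed_traj r alg \<tau> t))"
    by (intro nn_integral_mono_AE AE_pmfI pointwise)
  finally show ?thesis .
qed

lemma exp_regret_pair_sum_ge:
  fixes mu :: "'s pmf" and P :: "'s \<Rightarrow> 'a \<Rightarrow> 's pmf" and pol\<^sub>1 pol\<^sub>2 :: "'p \<Rightarrow> 's \<Rightarrow> 'a pmf"
    and r :: "'s \<Rightarrow> 'a \<Rightarrow> real" and H :: nat and \<Theta> :: "'p set"
  defines "g\<^sub>1 \<equiv> gap mu P pol\<^sub>1 r H \<Theta>" and "g\<^sub>2 \<equiv> gap mu P pol\<^sub>2 r H \<Theta>"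
  assumes g\<^sub>1_bounds: "\<And>\<theta>. 0 \<le> g\<^sub>1 \<theta> \<and> g\<^sub>1 \<theta> \<le> D" and g\<^sub>2_bounds: "\<And>\<theta>. 0 \<le> g\<^sub>2 \<theta> \<and> g\<^sub>2 \<theta> \<le> D"
    and gap_sum: "\<And>\<theta>. \<Delta> \<le> g\<^sub>1 \<theta> + g\<^sub>2 \<theta>"
    and "0 \<le> c" and traj_prob\<^sub>1: "\<And>\<theta>. c \<le> pmf (traj_dist mu P (pol\<^sub>1 \<theta>) H) \<tau>"
    and traj_prob\<^sub>2: "\<And>\<theta>. c \<le> pmf (traj_dist mu P (pol\<^sub>2 \<theta>) H) \<tau>"
    and "k \<le> n"
  shows "c ^ k * (\<Delta> * k) \<le> exp_regret mu P pol\<^sub>1 r H \<Theta> alg n + exp_regret mu P pol\<^sub>2 r H \<Theta> alg n"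
proof -
  define S\<^sub>1 where "S\<^sub>1 hist = ennreal (\<Sum>x\<leftarrow>hist. g\<^sub>1 (fst x))" for hist :: "('p, 's, 'a) history"
  define S\<^sub>2 where "S\<^sub>2 hist = ennreal (\<Sum>x\<leftarrow>hist. g\<^sub>2 (fst x))" for hist :: "('p, 's, 'a) history"
  have S_mono: "S\<^sub>1 hist \<le> S\<^sub>1 (hist @ [x])" "S\<^sub>2 hist \<le> S\<^sub>2 (hist @ [x])" for hist x
    using g\<^sub>1_bounds g\<^sub>2_bounds by (auto simp: S\<^sub>1_def S\<^sub>2_def intro: ennreal_leI)
  have fixed_traj: "ennreal (\<Delta> * k) \<le> (\<integral>\<^sup>+hist. S\<^sub>1 hist + S\<^sub>2 hist \<partial>measure_pmf (run_fixed_traj r alg \<tau> k))"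
    unfolding S\<^sub>1_def S\<^sub>2_def using g\<^sub>1_bounds g\<^sub>2_bounds gap_sum
    by (intro nn_integral_run_fixed_traj_regret_sum_ge) auto
  have "ennreal (c ^ k * (\<Delta> * k)) \<le> ennreal (c ^ k) *
      ((\<integral>\<^sup>+hist. S\<^sub>1 hist \<partial>measure_pmf (run_fixed_traj r alg \<tau> k))
       + (\<integral>\<^sup>+hist. S\<^sub>2 hist \<partial>measure_pmf (run_fixed_traj r alg \<tau> k)))"
    using fixed_traj \<open>0 \<le> c\<close> by (simp add: ennreal_mult' nn_integral_add mult_left_mono)
  also have "\<dots> \<le> (\<integral>\<^sup>+hist. S\<^sub>1 hist \<partial>measure_pmf (run mu P pol\<^sub>1 r H alg k))
       + (\<integral>\<^sup>+hist. S\<^sub>2 hist \<partial>measure_pmf (run mu P pol\<^sub>2 r H alg k))"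
    unfolding distrib_left
    by (intro add_mono nn_integral_run_ge_run_fixed_traj \<open>0 \<le> c\<close> traj_prob\<^sub>1 traj_prob\<^sub>2)
  also have "\<dots> \<le> (\<integral>\<^sup>+hist. S\<^sub>1 hist \<partial>measure_pmf (run mu P pol\<^sub>1 r H alg n))
       + (\<integral>\<^sup>+hist. S\<^sub>2 hist \<partial>measure_pmf (run mu P pol\<^sub>2 r H alg n))"
    by (intro add_mono nn_integral_run_mono S_mono \<open>k \<le> n\<close>)
  also have "\<dots> = ennreal (exp_regret mu P pol\<^sub>1 r H \<Theta> alg n) + ennreal (exp_regret mu P pol\<^sub>2 r H \<Theta> alg n)"
    unfolding S\<^sub>1_def S\<^sub>2_def g\<^sub>1_def g\<^sub>2_def
    using ennreal_exp_regret[OF g\<^sub>1_bounds[unfolded g\<^sub>1_def]] ennreal_exp_regret[OF g\<^sub>2_bounds[unfolded g\<^sub>2_def]]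
    by simp
  finally show ?thesis
    using g\<^sub>1_bounds g\<^sub>2_bounds unfolding g\<^sub>1_def g\<^sub>2_def
    by (simp add: exp_regret_nonneg ennreal_plus[symmetric] del: ennreal_plus)
qed

lemma KL_pmf_less_infinity:
  assumes "set_pmf p \<subseteq> set_pmf q" and "finite (set_pmf p)"
  shows "KL_pmf p q < \<infinity>"
proof -
  have "(\<lambda>x. pmf p x * ln (pmf p x / pmf q x)) summable_on set_pmf p"
    using assms(2) by simp
  then have "(\<lambda>x. pmf p x * ln (pmf p x / pmf q x)) summable_on UNIV"
    by (rule summable_on_cong_neutral[THEN iffD1, rotated -1]) (auto simp: set_pmf_eq)
  moreover have "\<forall>x. pmf q x = 0 \<longrightarrow> pmf p x = 0"
    using assms(1) by (auto simp: set_pmf_eq)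
  ultimately show ?thesis
    unfolding KL_pmf_def by simp
qed

abbreviation start :: "nat pmf" where "start \<equiv> return_pmf 0"

abbreviation stay :: "nat \<Rightarrow> nat \<Rightarrow> nat pmf" where "stay \<equiv> \<lambda>_ _. return_pmf 0"

definition coin_policy :: "('p \<Rightarrow> real) \<Rightarrow> 'p \<Rightarrow> nat \<Rightarrow> nat pmf" where
  "coin_policy q \<theta> s = map_pmf of_bool (bernoulli_pmf (q \<theta>))"

lemma relabel_coin_policy: "relabel t\<^sub>1 t\<^sub>2 (coin_policy q) = coin_policy (relabel t\<^sub>1 t\<^sub>2 q)"
  by (auto simp: relabel_def coin_policy_def fun_eq_iff)

lemma traj_dist_coin_policy:
  "traj_dist start stay (coin_policy q \<theta>) 1 = map_pmf (\<lambda>b. [(0, of_bool b)]) (bernoulli_pmf (q \<theta>))"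
  unfolding traj_dist_def coin_policy_def
  by (simp add: bind_return_pmf map_pmf_def bind_assoc_pmf)

lemma set_pmf_traj_dist_coin_policy:
  assumes "q \<theta> \<in> {0<..<1}"
  shows "set_pmf (traj_dist start stay (coin_policy q \<theta>) 1) = {[(0, 0)], [(0, 1)]}"
  unfolding traj_dist_coin_policy using assms by auto

lemma integrable_traj_dist_coin_policy:
  fixes f :: "(nat \<times> nat) list \<Rightarrow> real"
  shows "integrable (measure_pmf (traj_dist start stay (coin_policy q \<theta>) 1)) f"
  unfolding traj_dist_coin_policy by (intro integrable_measure_pmf_finite) (simp add: set_map_pmf)

lemma KL_pmf_traj_dist_coin_policy_less_infinity:
  assumes "q \<theta> \<in> {0<..<1}" and "q \<theta>' \<in> {0<..<1}"
  shows "KL_pmf (traj_dist start stay (coin_policy q \<theta>) 1) (traj_dist start stay (coin_policy q \<theta>') 1) < \<infinity>"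
  using set_pmf_traj_dist_coin_policy[of q \<theta>] set_pmf_traj_dist_coin_policy[of q \<theta>'] assms
  by (intro KL_pmf_less_infinity) auto

lemma pmf_traj_dist_coin_policy_zero:
  assumes "q \<theta> \<in> {0..1}"
  shows "pmf (traj_dist start stay (coin_policy q \<theta>) 1) [(0, 0)] = 1 - q \<theta>"
proof -
  have "inj (\<lambda>b. [(0::nat, of_bool b :: nat)])"
    by (auto simp: inj_def)
  then show ?thesis
    unfolding traj_dist_coin_policy using assms pmf_map_inj'[of "\<lambda>b. [(0::nat, of_bool b :: nat)]" _ False]
    by simp
qed

lemma Jret_coin_policy:
  assumes "q \<theta> \<in> {0..1}"
  shows "Jret start stay (coin_policy q) (\<lambda>_ a. real a * M) 1 \<theta> = q \<theta> * M"
  unfolding Jret_def traj_dist_coin_policy using assms by (simp add: ret_def)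

lemma gap_coin_policy:
  assumes "\<And>\<theta>. q \<theta> \<in> {0..1}" and "0 \<le> M"
  shows "gap start stay (coin_policy q) (\<lambda>_ a. real a * M) 1 {\<theta>\<^sub>1, \<theta>\<^sub>2} \<theta>
           = (max (q \<theta>\<^sub>1) (q \<theta>\<^sub>2) - q \<theta>) * M"
  using assms
  by (simp add: gap_def Jstar_def Jret_coin_policy cSup_insert sup_max max_mult_distrib_right left_diff_distrib
      del: One_nat_def)

definition coin_prob :: "real \<Rightarrow> real \<Rightarrow> real" where
  "coin_prob e \<theta> = (if \<theta> = 1 then 2 * e else e)"

lemma exp_regret_coin_policy_sum_ge:
  assumes "0 \<le> e" and "2 * e \<le> 1" and "0 \<le> M" and "k \<le> n"
  defines "r \<equiv> \<lambda>_ a. real a * M"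
  shows "(1 - 2 * e) ^ k * (e * M * k) \<le>
           exp_regret start stay (coin_policy (coin_prob e)) r 1 {1, 0} alg n
           + exp_regret start stay (coin_policy (relabel 1 0 (coin_prob e))) r 1 {1, 0} alg n"
proof (rule exp_regret_pair_sum_ge)
  have range: "coin_prob e \<theta> \<in> {e, 2 * e}" "relabel 1 0 (coin_prob e) \<theta> \<in> {e, 2 * e}" for \<theta>
    by (auto simp: coin_prob_def relabel_def)
  have prob: "coin_prob e \<theta> \<in> {0..1}" "relabel 1 0 (coin_prob e) \<theta> \<in> {0..1}" for \<theta>
    using range[of \<theta>] assms by auto
  have gap\<^sub>1: "gap start stay (coin_policy (coin_prob e)) r 1 {1, 0} \<theta> = (if \<theta> = 1 then 0 else e * M)"
    and gap\<^sub>2: "gap start stay (coin_policy (relabel 1 0 (coin_prob e))) r 1 {1, 0} \<theta>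
                 = (if \<theta> = 0 then 0 else e * M)" for \<theta>
    unfolding r_def gap_coin_policy[OF prob(1) \<open>0 \<le> M\<close>] gap_coin_policy[OF prob(2) \<open>0 \<le> M\<close>]
    using \<open>0 \<le> e\<close> by (auto simp: coin_prob_def relabel_def algebra_simps)
  show "0 \<le> gap start stay (coin_policy (coin_prob e)) r 1 {1, 0} \<theta>
        \<and> gap start stay (coin_policy (coin_prob e)) r 1 {1, 0} \<theta> \<le> e * M"
    "0 \<le> gap start stay (coin_policy (relabel 1 0 (coin_prob e))) r 1 {1, 0} \<theta>
        \<and> gap start stay (coin_policy (relabel 1 0 (coin_prob e))) r 1 {1, 0} \<theta> \<le> e * M"
    "e * M \<le> gap start stay (coin_policy (coin_prob e)) r 1 {1, 0} \<theta>
        + gap start stay (coin_policy (relabel 1 0 (coin_prob e))) r 1 {1, 0} \<theta>" for \<theta>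
    unfolding gap\<^sub>1 gap\<^sub>2 using assms by auto
  show "1 - 2 * e \<le> pmf (traj_dist start stay (coin_policy (coin_prob e) \<theta>) 1) [(0, 0)]"
    "1 - 2 * e \<le> pmf (traj_dist start stay (coin_policy (relabel 1 0 (coin_prob e)) \<theta>) 1) [(0, 0)]"
    for \<theta>
    unfolding pmf_traj_dist_coin_policy_zero[of "coin_prob e", OF prob(1)]
    pmf_traj_dist_coin_policy_zero[of "relabel 1 0 (coin_prob e)", OF prob(2)]
    using range[of \<theta>] assms by auto
qed (use assms in auto)

lemma inverse_le_power_mult_ceiling:
  fixes \<Delta> :: real
  assumes "0 < \<Delta>"
  defines "k \<equiv> nat \<lceil>1 / \<Delta>\<^sup>2\<rceil>"
  shows "1 / (2 * \<Delta>) \<le> (1 - 1 / (2 * (real k + 1))) ^ k * (\<Delta> * k)"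
proof -
  have "1 / 2 \<le> 1 + real k * (- 1 / (2 * (real k + 1)))"
    by (simp add: field_simps)
  also have "\<dots> \<le> (1 - 1 / (2 * (real k + 1))) ^ k"
    using Bernoulli_inequality[of "- 1 / (2 * (real k + 1))" k] by (simp add: field_simps)
  finally have "1 / 2 \<le> (1 - 1 / (2 * (real k + 1))) ^ k" .
  moreover have "1 / \<Delta>\<^sup>2 \<le> k"
    unfolding k_def by (rule real_nat_ceiling_ge)
  then have "1 / \<Delta> \<le> \<Delta> * k"
    using \<open>0 < \<Delta>\<close> by (simp add: field_simps power2_eq_square)
  ultimately have "1 / 2 * (1 / \<Delta>) \<le> (1 - 1 / (2 * (real k + 1))) ^ k * (\<Delta> * k)"
    using \<open>0 < \<Delta>\<close> by (intro mult_mono) auto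
  then show ?thesis
    by simp
qed

theorem theorem1:
  fixes \<Delta> :: real
  assumes "0 < \<Delta>" and "\<Delta> \<le> 1"
  shows "\<exists>(mu :: nat pmf) (P :: nat \<Rightarrow> nat \<Rightarrow> nat pmf) (pol :: real \<Rightarrow> nat \<Rightarrow> nat pmf)
            (r :: nat \<Rightarrow> nat \<Rightarrow> real) (H :: nat) (\<theta>\<^sub>1 :: real) (\<theta>\<^sub>2 :: real).
     \<theta>\<^sub>1 \<noteq> \<theta>\<^sub>2 \<and>
     (\<forall>\<theta>\<in>{\<theta>\<^sub>1, \<theta>\<^sub>2}. integrable (measure_pmf (traj_dist mu P (pol \<theta>) H)) (ret r)) \<and>
     KL_pmf (traj_dist mu P (pol \<theta>\<^sub>1) H) (traj_dist mu P (pol \<theta>\<^sub>2) H) < \<infinity> \<and>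
     KL_pmf (traj_dist mu P (pol \<theta>\<^sub>2) H) (traj_dist mu P (pol \<theta>\<^sub>1) H) < \<infinity> \<and>
     Jret mu P pol r H \<theta>\<^sub>1 - Jret mu P pol r H \<theta>\<^sub>2 = \<Delta> \<and>
     (\<exists>N. \<forall>n\<ge>N. \<forall>alg :: (real, nat, nat) history \<Rightarrow> real pmf.
        (\<forall>hist. set_pmf (alg hist) \<subseteq> {\<theta>\<^sub>1, \<theta>\<^sub>2}) \<longrightarrow>
        max (exp_regret mu P pol r H {\<theta>\<^sub>1, \<theta>\<^sub>2} alg n)
            (exp_regret mu P (relabel \<theta>\<^sub>1 \<theta>\<^sub>2 pol) r H {\<theta>\<^sub>1, \<theta>\<^sub>2} alg n)
          \<ge> 1 / (32 * \<Delta>))"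
proof -
  define k where "k = nat \<lceil>1 / \<Delta>\<^sup>2\<rceil>"
  define e where "e = 1 / (4 * (real k + 1))"
  define M where "M = \<Delta> / e"
  define r where "r = (\<lambda>(_::nat) a. real a * M)"
  define q where "q = coin_prob e"
  have e: "0 < e" "2 * e < 1" "1 - 2 * e = 1 - 1 / (2 * (real k + 1))" and "e * M = \<Delta>" "0 \<le> M"
    using \<open>0 < \<Delta>\<close> by (auto simp: e_def M_def field_simps)
  have prob: "q \<theta> \<in> {0<..<1}" "q \<theta> \<in> {0..1}" for \<theta>
    using e(1,2) by (simp_all add: q_def coin_prob_def)
  have regret: "1 / (32 * \<Delta>) \<le> max (exp_regret start stay (coin_policy q) r 1 {1, 0} alg n)
      (exp_regret start stay (relabel 1 0 (coin_policy q)) r 1 {1, 0} alg n)" if "k \<le> n" for n alg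
  proof -
    have "1 / (2 * \<Delta>) \<le> exp_regret start stay (coin_policy q) r 1 {1, 0} alg n
        + exp_regret start stay (relabel 1 0 (coin_policy q)) r 1 {1, 0} alg n"
      using exp_regret_coin_policy_sum_ge[of e M k n alg] inverse_le_power_mult_ceiling[OF \<open>0 < \<Delta>\<close>]
        e \<open>e * M = \<Delta>\<close> \<open>0 \<le> M\<close> that
      unfolding relabel_coin_policy q_def r_def k_def by simp
    moreover have "1 / (32 * \<Delta>) \<le> 1 / (4 * \<Delta>)"
      using \<open>0 < \<Delta>\<close> by (simp add: frac_le)
    ultimately show ?thesis
      by (simp add: max_def)
  qed
  show ?thesis
  proof (intro exI conjI)
    show "\<forall>\<theta>\<in>{1, 0}. integrable (measure_pmf (traj_dist start stay (coin_policy q \<theta>) 1)) (ret r)"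
      by (intro ballI integrable_traj_dist_coin_policy)
    show "KL_pmf (traj_dist start stay (coin_policy q 1) 1) (traj_dist start stay (coin_policy q 0) 1) < \<infinity>"
         "KL_pmf (traj_dist start stay (coin_policy q 0) 1) (traj_dist start stay (coin_policy q 1) 1) < \<infinity>"
      by (intro KL_pmf_traj_dist_coin_policy_less_infinity prob)+
    show "Jret start stay (coin_policy q) r 1 1 - Jret start stay (coin_policy q) r 1 0 = \<Delta>"
      unfolding r_def Jret_coin_policy[of q, OF prob(2)] using \<open>e * M = \<Delta>\<close>
      by (simp add: q_def coin_prob_def algebra_simps)
  \<comment> \<open>The gaps are bounded for every parameter.\<close>
  qed (use regret in auto)
qed

end
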